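(* Let $\psi:\mathbb N\to(0,1/2)$ be non-increasing with $\lim_{n\to\infty}n\psi(n)=0$. Let $\{y_n\}_{n\in\mathbb N}$ be positive numbers such that $$r_n:=\tfrac12\min\{\psi(n)^{-2}y_n,\ n^{-2}y_n^{-1}\}\to\infty\quad (n\to\infty).$$ If $x\in[0,1)$ is primitive $\psi$-approximable, then $\mathcal R_n(x,y_n)\subset\mathcal C_{r_n}$ for infinitely many $n$.
   Context: $x\in\mathbb R$ is primitive $\psi$-approximable if there are infinitely many $n\in\mathbb N$ for which some $m\in\mathbb Z$ with $\gcd(m,n)=1$ satisfies $|x-\tfrac mn|<\tfrac{\psi(n)}{n}$. $\Gamma=\mathrm{SL}_2(\mathbb Z)$, $\mathcal M=\Gamma\backslash\mathbb H$; for $Y>0$, $\mathcal C_Y\subset\mathcal M$ is the image of $\{z\in\mathbb H:\mathrm{Im}(z)>Y\}$ under the projection $\mathbb H\to\mathcal M$. $\mathcal R_n(x,y)=\{\Gamma(x+\tfrac jn+iy):0\le j\le n-1\}$. *)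

theory Defs
  imports "HOL-Analysis.Analysis"
begin

definition primitive_psi_approximable :: "(nat \<Rightarrow> real) \<Rightarrow> real \<Rightarrow> bool" where
  "primitive_psi_approximable \<psi> x \<longleftrightarrow>
     infinite {n::nat. n \<ge> 1 \<and> (\<exists>m::int. coprime m (int n) \<and> \<bar>x - real_of_int m / real n\<bar> < \<psi> n / real n)}"

definition mobius_act :: "int \<Rightarrow> int \<Rightarrow> int \<Rightarrow> int \<Rightarrow> complex \<Rightarrow> complex" where
  "mobius_act a b c d z = (of_int a * z + of_int b) / (of_int c * z + of_int d)"

text \<open>The orbit of z under SL2(Z) meets the region Im > Y, i.e. the image of z in
  the modular surface lies in the cusp neighbourhood C_Y.\<close>
definition in_cusp :: "real \<Rightarrow> complex \<Rightarrow> bool" where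
  "in_cusp Y z \<longleftrightarrow> (\<exists>a b c d::int. a * d - b * c = 1 \<and> Im (mobius_act a b c d z) > Y)"

definition R_subset_cusp :: "nat \<Rightarrow> real \<Rightarrow> real \<Rightarrow> real \<Rightarrow> bool" where
  "R_subset_cusp n x y Y \<longleftrightarrow>
     (\<forall>j<n. in_cusp Y (Complex (x + real j / real n) y))"

end

theory Submission
  imports Defs
begin

text \<open>If \<open>\<bar>x - m/n\<bar> < \<psi>(n)/n\<close>, every point \<open>s + iy\<close> with \<open>s = x + j/n\<close> lies within
  \<open>\<psi>(n)/n\<close> of the rational \<open>(m+j)/n = e/c\<close> written in lowest terms, so \<open>0 < c \<le> n\<close>.
  A matrix of \<open>SL\<^sub>2(\<int>)\<close> with bottom row \<open>(c, -e)\<close> sends \<open>e/c\<close> to \<open>\<infinity>\<close> and lifts the point to height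
  \<open>y / ((cs - e)\<^sup>2 + (cy)\<^sup>2) > y / (\<psi>(n)\<^sup>2 + (ny)\<^sup>2) \<ge> r\<^sub>n\<close>.
  Hence every \<open>n\<close> witnessing the approximability of \<open>x\<close> works.\<close>

lemma Im_mobius_act:
  assumes "a * d - b * c = 1"
  shows "Im (mobius_act a b c d z) = Im z / ((c * Re z + d)\<^sup>2 + (c * Im z)\<^sup>2)"
proof -
  have det: "real_of_int a * real_of_int d - real_of_int b * real_of_int c = 1"
    using assms by (metis of_int_1 of_int_diff of_int_mult)
  have "a * Im z * (c * Re z + d) - (a * Re z + b) * (c * Im z)
      = Im z * (real_of_int a * real_of_int d - real_of_int b * real_of_int c)"
    by algebra
  then show ?thesis
    unfolding mobius_act_def Im_divide using det by simp
qed

lemma in_cusp_of_coprime: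
  assumes "coprime c e"
    and "Y < Im z / ((c * Re z - e)\<^sup>2 + (c * Im z)\<^sup>2)"
  shows "in_cusp Y z"
proof -
  obtain u v where "u * c + v * e = 1"
    using bezout_int[of c e] assms(1) by auto
  then have det: "(- v) * (- e) - (- u) * c = 1"
    by (simp add: algebra_simps)
  have "Im (mobius_act (- v) (- u) c (- e) z) = Im z / ((c * Re z - e)\<^sup>2 + (c * Im z)\<^sup>2)"
    using Im_mobius_act[OF det] by simp
  with assms(2) det show ?thesis
    unfolding in_cusp_def by metis
qed

lemma half_min_divide_le_divide_add:
  fixes P Q t :: real
  assumes "0 < P" "0 < Q" "0 \<le> t"
  shows "(1/2) * min (t / P) (t / Q) \<le> t / (P + Q)"
proof (cases "P \<le> Q")
  case True
  then have "t / (2 * Q) \<le> t / (P + Q)"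
    using assms by (intro divide_left_mono) auto
  moreover have "(1/2) * min (t / P) (t / Q) \<le> t / (2 * Q)"
    by (simp add: min_le_iff_disj)
  ultimately show ?thesis by linarith
next
  case False
  then have "t / (2 * P) \<le> t / (P + Q)"
    using assms by (intro divide_left_mono) auto
  moreover have "(1/2) * min (t / P) (t / Q) \<le> t / (2 * P)"
    by (simp add: min_le_iff_disj)
  ultimately show ?thesis by linarith
qed

lemma reduced_fraction_near:
  fixes s p :: real and k :: int and n :: nat
  assumes n: "n \<ge> 1" and near: "\<bar>s - k / n\<bar> < p / n"
  obtains c e :: int where "coprime c e" "0 < c" "c \<le> int n" "\<bar>c * s - e\<bar> < p"
proof -
  define g where "g = gcd k (int n)"
  define c where "c = int n div g"
  define e where "e = k div g"
  have g_pos: "g > 0"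
    using n by (simp add: g_def)
  have coprime: "coprime c e"
    using div_gcd_coprime[of k "int n"] n by (simp add: c_def e_def g_def coprime_commute)
  have n_eq: "int n = c * g" and k_eq: "k = e * g"
    by (simp_all add: c_def e_def g_def)
  have c_pos: "c > 0"
    using zero_less_mult_pos2[of c g] n g_pos n_eq by simp
  have c_le: "c \<le> int n"
    using n_eq c_pos g_pos by (simp add: mult_le_cancel_left1 flip: int_one_le_iff_zero_less)
  have "real n = of_int c * of_int g" "real_of_int k = of_int e * of_int g"
    using arg_cong[OF n_eq, of real_of_int] k_eq by simp_all
  then have "c * s - e = (n * s - k) / g"
    using g_pos by (simp add: field_simps)
  also have "\<bar>\<dots>\<bar> \<le> \<bar>n * s - k\<bar>"
    using g_pos by (simp add: divide_le_eq mult_le_cancel_left1)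
  also have "\<dots> = \<bar>n * (s - k / n)\<bar>"
    using n by (simp add: right_diff_distrib)
  also have "\<dots> = n * \<bar>s - k / n\<bar>"
    by (simp add: abs_mult)
  also have "\<dots> < n * (p / n)"
    using near n by (intro mult_strict_left_mono) auto
  also have "\<dots> = p"
    using n by simp
  finally show ?thesis
    using that coprime c_pos c_le by blast
qed

lemma in_cusp_near_rational:
  fixes s t p :: real and k :: int and n :: nat
  assumes n: "n \<ge> 1" and t: "0 < t" and p: "0 < p"
    and near: "\<bar>s - k / n\<bar> < p / n"
  shows "in_cusp ((1/2) * min (t / p\<^sup>2) (1 / ((real n)\<^sup>2 * t))) (Complex s t)"
proof -
  obtain c e :: int where coprime: "coprime c e" and c_pos: "0 < c" and c_le: "c \<le> int n"
    and close: "\<bar>c * s - e\<bar> < p"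
    using reduced_fraction_near[OF n near] .
  have horizontal: "(c * s - e)\<^sup>2 < p\<^sup>2"
    using close p by (intro power2_strict_mono) simp
  have vertical: "(c * t)\<^sup>2 \<le> (n * t)\<^sup>2"
    using c_le c_pos t by (intro power_mono mult_right_mono) auto
  define D where "D = (c * s - e)\<^sup>2 + (c * t)\<^sup>2"
  have "0 < D"
    using c_pos t by (simp add: D_def add_nonneg_pos)
  have "D < p\<^sup>2 + (n * t)\<^sup>2"
    unfolding D_def using horizontal vertical by linarith
  have "(1/2) * min (t / p\<^sup>2) (1 / ((real n)\<^sup>2 * t))
      = (1/2) * min (t / p\<^sup>2) (t / (n * t)\<^sup>2)"
    using t by (simp add: power2_eq_square)
  also have "\<dots> \<le> t / (p\<^sup>2 + (n * t)\<^sup>2)"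
    using n p t by (intro half_min_divide_le_divide_add) auto
  also have "\<dots> < t / D"
    using \<open>D < _\<close> \<open>0 < D\<close> t by (intro divide_strict_left_mono) auto
  finally show ?thesis
    by (intro in_cusp_of_coprime[OF coprime]) (simp add: D_def)
qed

theorem theorem4p3:
  fixes \<psi> :: "nat \<Rightarrow> real" and y :: "nat \<Rightarrow> real" and x :: real
  assumes psi_range: "\<forall>n\<ge>1. 0 < \<psi> n \<and> \<psi> n < 1/2"
    and psi_noninc: "\<forall>m n. 1 \<le> m \<longrightarrow> m \<le> n \<longrightarrow> \<psi> n \<le> \<psi> m"
    and psi_lim: "(\<lambda>n. real n * \<psi> n) \<longlonglongrightarrow> 0"
    and y_pos: "\<forall>n\<ge>1. 0 < y n"
    and r_lim: "filterlim (\<lambda>n. (1/2) * min (y n / (\<psi> n)^2) (1 / ((real n)^2 * y n))) at_top sequentially"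
    and x_range: "0 \<le> x" "x < 1"
    and x_approx: "primitive_psi_approximable \<psi> x"
  shows "infinite {n::nat. n \<ge> 1 \<and>
           R_subset_cusp n x (y n) ((1/2) * min (y n / (\<psi> n)^2) (1 / ((real n)^2 * y n)))}"
proof (rule infinite_super[OF _ x_approx[unfolded primitive_psi_approximable_def]], clarify)
  fix n :: nat and m :: int
  assume n: "n \<ge> 1" and near: "\<bar>x - m / n\<bar> < \<psi> n / n"
  have "in_cusp ((1/2) * min (y n / (\<psi> n)\<^sup>2) (1 / ((real n)\<^sup>2 * y n))) (Complex (x + j / n) (y n))"
    for j :: nat
  proof (rule in_cusp_near_rational[where k = "m + int j"])
    show "\<bar>x + j / n - of_int (m + int j) / n\<bar> < \<psi> n / n"
      using near n by (simp add: add_divide_distrib)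
  qed (use n y_pos psi_range in auto)
  then show "R_subset_cusp n x (y n) ((1/2) * min (y n / (\<psi> n)\<^sup>2) (1 / ((real n)\<^sup>2 * y n)))"
    unfolding R_subset_cusp_def by blast
qed

end
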